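(* Let $\|\cdot\|$ be a norm on $\mathbb{R}^m$ with dual norm $\|\cdot\|_*$. Let $\mathbf{z}_i=(\mathbf{x}_i,y_i)\in\mathbb{R}^m$, $i=1,\ldots,N$, be observations with $\|\mathbf{z}_i\|\le R$ for all $i$, and let $\mathbf{Z}\in\mathbb{R}^{m\times N}$ be the matrix with columns $\mathbf{z}_i$. Let $\mathcal{B}\subseteq\mathbb{R}^{m-1}$, $\gamma_N>0$, and let $\hat{\boldsymbol{\beta}}$ be an optimal solution of $$\min_{\boldsymbol{\beta}}\ \|(-\boldsymbol{\beta},1)\|_*\quad\text{s.t.}\quad \|(-\boldsymbol{\beta},1)'\mathbf{Z}\|_1\le\gamma_N,\ \ \boldsymbol{\beta}\in\mathcal{B}.$$ Let $\boldsymbol{\beta}^*\in\mathbb{R}^{m-1}$ satisfy $\|\mathbf{Z}'(-\boldsymbol{\beta}^*,1)\|_1\le\gamma_N$ and $\boldsymbol{\beta}^*\in\mathcal{B}$. Define $$\mathcal{A}(\boldsymbol{\beta}^* )=\operatorname{cone}\{\mathbf{v}\in\mathbb{R}^m:\ \|(-\boldsymbol{\beta}^*,1)+\mathbf{v}\|_*\le\|(-\boldsymbol{\beta}^*,1)\|_*\}\cap\mathbb{S}^m,$$ and assume there is $\underline{\alpha}>0$ with $\inf_{\mathbf{v}\in\mathcal{A}(\boldsymbol{\beta}^* )}\mathbf{v}'\mathbf{Z}\mathbf{Z}'\mathbf{v}\ge\underline{\alpha}$. Then $$\|\hat{\boldsymbol{\beta}}-\boldsymbol{\beta}^*\|_2\le\frac{2R\gamma_N}{\underline{\alpha}}\Psi(\boldsymbol{\beta}^*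 ),\qquad \Psi(\boldsymbol{\beta}^* )=\sup_{\mathbf{v}\in\mathcal{A}(\boldsymbol{\beta}^* )}\|\mathbf{v}\|_*.$$
   Context: $\mathbb{S}^m$ denotes the unit Euclidean sphere in $\mathbb{R}^m$; $\operatorname{cone}(S)$ is the cone generated by $S$. The dual norm is $\|\boldsymbol{\theta}\|_*=\sup_{\|\mathbf{z}\|\le1}\boldsymbol{\theta}'\mathbf{z}$; $(-\boldsymbol{\beta},1)\in\mathbb{R}^m$ is $-\boldsymbol{\beta}$ with coordinate $1$ appended. *)

theory Defs
  imports "HOL-Analysis.Analysis"
begin

text \<open>R^m is modelled as real^('n option): coordinate None is the response y,
  coordinates Some j are the features x (so R^(m-1) = real^'n).\<close>

definition is_norm :: "(('a::real_vector) \<Rightarrow> real) \<Rightarrow> bool" where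
  "is_norm nrm \<longleftrightarrow>
     (\<forall>x. 0 \<le> nrm x) \<and> (\<forall>x. nrm x = 0 \<longleftrightarrow> x = 0) \<and>
     (\<forall>c x. nrm (c *\<^sub>R x) = \<bar>c\<bar> * nrm x) \<and>
     (\<forall>x y. nrm (x + y) \<le> nrm x + nrm y)"

definition dual_norm :: "(('a::real_inner) \<Rightarrow> real) \<Rightarrow> 'a \<Rightarrow> real" where
  "dual_norm nrm \<theta> = Sup {\<theta> \<bullet> z | z. nrm z \<le> 1}"

definition aug :: "real^('n::finite) \<Rightarrow> real^('n option)" where
  "aug \<beta> = (\<chi> i. case i of None \<Rightarrow> 1 | Some j \<Rightarrow> - (\<beta> $ j))"

text \<open>|| (-beta,1)' Z ||_1 with Z the matrix whose columns are z 0, ..., z (N-1).\<close>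
definition l1_resid :: "nat \<Rightarrow> (nat \<Rightarrow> real^('n::finite option)) \<Rightarrow> real^('n option) \<Rightarrow> real" where
  "l1_resid N z a = (\<Sum>i<N. \<bar>a \<bullet> z i\<bar>)"

definition gram_form :: "nat \<Rightarrow> (nat \<Rightarrow> real^('n::finite option)) \<Rightarrow> real^('n option) \<Rightarrow> real" where
  "gram_form N z v = (\<Sum>i<N. (v \<bullet> z i)^2)"

definition A_set :: "(real^('n::finite option) \<Rightarrow> real) \<Rightarrow> real^'n \<Rightarrow> (real^('n option)) set" where
  "A_set nrm \<beta> = cone hull {v. dual_norm nrm (aug \<beta> + v) \<le> dual_norm nrm (aug \<beta>)} \<inter> sphere 0 1"

definition Psi :: "(real^('n::finite option) \<Rightarrow> real) \<Rightarrow> real^'n \<Rightarrow> real" where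
  "Psi nrm \<beta> = Sup (dual_norm nrm ` A_set nrm \<beta>)"

end

theory Submission
  imports Defs
begin

text \<open>Put \<open>v = (-\<beta>hat,1) - (-\<beta>star,1)\<close>. Optimality of \<open>\<beta>hat\<close> puts \<open>v\<close> in the cone
  defining \<open>A(\<beta>star)\<close>, so \<open>u = v / \<parallel>v\<parallel>\<^sub>2 \<in> A(\<beta>star)\<close>. Feasibility of both vectors gives
  \<open>\<parallel>Z'v\<parallel>\<^sub>1 \<le> 2\<gamma>\<close>, and Hoelder's inequality \<open>|u'z\<^sub>i| \<le> \<parallel>u\<parallel>\<^sub>* R\<close> bounds each term of
  \<open>u'ZZ'u = \<Sum>(u'z\<^sub>i)\<^sup>2\<close> by \<open>|u'z\<^sub>i| \<parallel>u\<parallel>\<^sub>* R\<close>. Hence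
  \<open>\<alpha> \<le> u'ZZ'u \<le> R \<parallel>u\<parallel>\<^sub>* \<parallel>Z'v\<parallel>\<^sub>1 / \<parallel>v\<parallel>\<^sub>2 \<le> 2R\<gamma> \<Psi>(\<beta>star) / \<parallel>v\<parallel>\<^sub>2\<close>.\<close>

lemma is_norm_zero: "is_norm nrm \<Longrightarrow> nrm 0 = 0"
  by (simp add: is_norm_def)

lemma is_norm_minus: "is_norm nrm \<Longrightarrow> nrm (- x) = nrm x"
  unfolding is_norm_def by (metis abs_minus_cancel abs_one mult_1 scaleR_minus1_left)

lemma is_norm_sum_le:
  assumes "is_norm nrm"
  shows "nrm (\<Sum>i\<in>A. f i) \<le> (\<Sum>i\<in>A. nrm (f i))"
proof (induction A rule: infinite_finite_induct)
  case (insert x F)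
  then show ?case using assms unfolding is_norm_def by (smt (verit) sum.insert)
qed (use is_norm_zero[OF assms] in simp_all)

lemma is_norm_le_norm_mult:
  fixes nrm :: "'a::euclidean_space \<Rightarrow> real"
  assumes "is_norm nrm"
  shows "nrm x \<le> norm x * (\<Sum>b\<in>Basis. nrm b)"
proof -
  have "nrm x = nrm (\<Sum>b\<in>Basis. (x \<bullet> b) *\<^sub>R b)"
    by (simp add: euclidean_representation)
  also have "\<dots> \<le> (\<Sum>b\<in>Basis. nrm ((x \<bullet> b) *\<^sub>R b))"
    by (rule is_norm_sum_le[OF assms])
  also have "\<dots> = (\<Sum>b\<in>Basis. \<bar>x \<bullet> b\<bar> * nrm b)"
    using assms by (simp add: is_norm_def)
  also have "\<dots> \<le> (\<Sum>b\<in>Basis. norm x * nrm b)"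
    using Basis_le_norm assms by (intro sum_mono mult_right_mono) (auto simp: is_norm_def)
  finally show ?thesis by (simp add: sum_distrib_left)
qed

lemma is_norm_continuous_on:
  fixes nrm :: "'a::euclidean_space \<Rightarrow> real"
  assumes n: "is_norm nrm"
  shows "continuous_on S nrm"
proof -
  define K where "K = (\<Sum>b\<in>Basis. nrm b)"
  have "K-lipschitz_on UNIV nrm"
  proof (rule lipschitz_onI)
    fix x y :: 'a
    have "nrm x \<le> nrm y + nrm (x - y)" "nrm y \<le> nrm x + nrm (y - x)"
      using n unfolding is_norm_def by (metis add.commute diff_add_cancel)+
    moreover have "nrm (y - x) = nrm (x - y)"
      using is_norm_minus[OF n, of "x - y"] by simp
    moreover have "nrm (x - y) \<le> K * dist x y"
      using is_norm_le_norm_mult[OF n, of "x - y"] by (simp add: K_def dist_norm mult.commute)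
    ultimately show "dist (nrm x) (nrm y) \<le> K * dist x y"
      by (simp add: dist_real_def abs_le_iff)
  qed (use n in \<open>simp add: K_def is_norm_def sum_nonneg\<close>)
  then show ?thesis
    using lipschitz_on_continuous_on continuous_on_subset by blast
qed

text \<open>All norms on a finite-dimensional space are equivalent; the lower bound is the
  minimum of \<open>nrm\<close> over the compact Euclidean unit sphere.\<close>

lemma is_norm_bounded_below:
  fixes nrm :: "'a::euclidean_space \<Rightarrow> real"
  assumes n: "is_norm nrm"
  obtains c where "c > 0" "\<And>x. c * norm x \<le> nrm x"
proof -
  obtain x0 :: 'a where x0: "norm x0 = 1" "\<And>y. norm y = 1 \<Longrightarrow> nrm x0 \<le> nrm y"
    using continuous_attains_inf[of "sphere 0 1" nrm] is_norm_continuous_on[OF n] by auto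
  have "nrm x0 > 0"
    using n x0(1) unfolding is_norm_def by (metis less_eq_real_def norm_zero zero_neq_one)
  moreover have "nrm x0 * norm x \<le> nrm x" for x
  proof (cases "x = 0")
    case False
    have "nrm x0 \<le> nrm (x /\<^sub>R norm x)" using x0(2) False by simp
    also have "\<dots> = nrm x / norm x"
      using n unfolding is_norm_def by (simp add: divide_inverse mult.commute)
    finally show ?thesis using False by (simp add: field_simps)
  qed (use is_norm_zero[OF n] in simp)
  ultimately show ?thesis using that by blast
qed

lemma dual_norm_set_bounded:
  fixes nrm :: "'a::euclidean_space \<Rightarrow> real"
  assumes "is_norm nrm"
  obtains K where "\<And>\<theta> z. nrm z \<le> 1 \<Longrightarrow> \<theta> \<bullet> z \<le> K * norm \<theta>"
proof -
  obtain c where c: "c > 0" "\<And>x. c * norm x \<le> nrm x"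
    using is_norm_bounded_below[OF assms] by blast
  have "\<theta> \<bullet> z \<le> 1 / c * norm \<theta>" if "nrm z \<le> 1" for \<theta> z :: 'a
  proof -
    have "norm z \<le> 1 / c" using c that by (smt (verit) mult.commute pos_le_divide_eq)
    then have "norm \<theta> * norm z \<le> norm \<theta> * (1 / c)" by (rule mult_left_mono) simp
    then show ?thesis by (smt (verit) norm_cauchy_schwarz mult.commute)
  qed
  then show ?thesis using that by blast
qed

lemma dual_norm_upper:
  fixes nrm :: "'a::euclidean_space \<Rightarrow> real"
  assumes "is_norm nrm" "nrm z \<le> 1"
  shows "\<theta> \<bullet> z \<le> dual_norm nrm \<theta>"
proof -
  obtain K where "\<And>\<theta> z. nrm z \<le> 1 \<Longrightarrow> \<theta> \<bullet> z \<le> K * norm \<theta>"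
    using dual_norm_set_bounded[OF assms(1)] by blast
  then have "bdd_above {\<theta> \<bullet> z | z. nrm z \<le> 1}" by (auto intro!: bdd_aboveI[of _ "K * norm \<theta>"])
  then show ?thesis unfolding dual_norm_def using assms(2) by (auto intro: cSup_upper)
qed

lemma dual_norm_nonneg:
  fixes nrm :: "'a::euclidean_space \<Rightarrow> real"
  assumes "is_norm nrm"
  shows "0 \<le> dual_norm nrm \<theta>"
  using dual_norm_upper[OF assms, of 0 \<theta>] is_norm_zero[OF assms] by simp

lemma dual_norm_le_norm_mult:
  fixes nrm :: "'a::euclidean_space \<Rightarrow> real"
  assumes "is_norm nrm"
  obtains K where "\<And>\<theta>. dual_norm nrm \<theta> \<le> K * norm \<theta>"
proof -
  obtain K where K: "\<And>\<theta> z. nrm z \<le> 1 \<Longrightarrow> \<theta> \<bullet> z \<le> K * norm \<theta>"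
    using dual_norm_set_bounded[OF assms] by blast
  have "dual_norm nrm \<theta> \<le> K * norm \<theta>" for \<theta>
    unfolding dual_norm_def
  proof (rule cSup_least)
    show "{\<theta> \<bullet> z |z. nrm z \<le> 1} \<noteq> {}" using is_norm_zero[OF assms]
      by (metis (mono_tags, lifting) empty_iff mem_Collect_eq order.refl zero_le_one)
  qed (use K in blast)
  then show ?thesis using that by blast
qed

lemma dual_norm_zero:
  fixes nrm :: "'a::euclidean_space \<Rightarrow> real"
  assumes "is_norm nrm"
  shows "dual_norm nrm 0 = 0"
  using dual_norm_le_norm_mult[OF assms] dual_norm_nonneg[OF assms]
  by (metis norm_zero mult_zero_right order_antisym)

lemma abs_inner_le_dual_norm:
  fixes nrm :: "'a::euclidean_space \<Rightarrow> real"
  assumes n: "is_norm nrm"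
  shows "\<bar>\<theta> \<bullet> z\<bar> \<le> dual_norm nrm \<theta> * nrm z"
proof (cases "z = 0")
  case False
  then have np: "nrm z > 0" using n unfolding is_norm_def by (metis less_eq_real_def)
  define w where "w = z /\<^sub>R nrm z"
  have "nrm w = 1" "nrm (- w) = 1"
    using n np is_norm_minus[OF n] unfolding w_def is_norm_def by auto
  then have "\<bar>\<theta> \<bullet> w\<bar> \<le> dual_norm nrm \<theta>"
    using dual_norm_upper[OF n, of w \<theta>] dual_norm_upper[OF n, of "- w" \<theta>] by auto
  moreover have "\<theta> \<bullet> z = nrm z * (\<theta> \<bullet> w)" using np unfolding w_def by simp
  ultimately show ?thesis using np by (simp add: abs_mult mult.commute mult_left_mono)
qed (use dual_norm_nonneg[OF n] is_norm_zero[OF n] in simp)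

lemma norm_aug_diff: "norm (aug a - aug b) = norm (a - b)"
proof -
  have "(aug a - aug b) \<bullet> (aug a - aug b) = (a - b) \<bullet> (a - b)"
    unfolding inner_vec_def UNIV_option_conv
    by (simp add: aug_def sum.reindex inner_real_def) (auto simp: algebra_simps intro: sum.cong)
  then show ?thesis by (simp add: norm_eq_sqrt_inner)
qed

lemma aug_nonzero: "aug b \<noteq> 0"
  by (metis aug_def option.simps(4) vec_lambda_beta zero_index zero_neq_one)

lemma normalized_in_cone_hull_sphere:
  fixes v :: "'a::real_normed_vector"
  assumes "v \<in> S" "v \<noteq> 0"
  shows "v /\<^sub>R norm v \<in> cone hull S \<inter> sphere 0 1"
  using assms cone_cone_hull[of S] hull_subset[of S cone]
  unfolding cone_def by (auto simp: divide_inverse_commute)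

lemma normalized_in_A_set:
  "dual_norm nrm (aug \<beta> + v) \<le> dual_norm nrm (aug \<beta>) \<Longrightarrow> v \<noteq> 0 \<Longrightarrow>
     v /\<^sub>R norm v \<in> A_set nrm \<beta>"
  unfolding A_set_def by (rule normalized_in_cone_hull_sphere) simp_all

lemma A_set_nonempty:
  assumes "is_norm nrm"
  shows "A_set nrm \<beta> \<noteq> {}"
  using normalized_in_A_set[of nrm \<beta> "- aug \<beta>"] aug_nonzero[of \<beta>]
    dual_norm_zero[OF assms] dual_norm_nonneg[OF assms] by auto

lemma dual_norm_le_Psi:
  assumes n: "is_norm nrm" and u: "u \<in> A_set nrm \<beta>"
  shows "dual_norm nrm u \<le> Psi nrm \<beta>"
proof -
  obtain K where K: "\<And>\<theta>. dual_norm nrm \<theta> \<le> K * norm \<theta>"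
    using dual_norm_le_norm_mult[OF n] by blast
  have "bdd_above (dual_norm nrm ` A_set nrm \<beta>)"
  proof (rule bdd_aboveI[of _ K])
    fix t assume "t \<in> dual_norm nrm ` A_set nrm \<beta>"
    then obtain w where "norm w = 1" "t = dual_norm nrm w" unfolding A_set_def by auto
    then show "t \<le> K" using K[of w] by simp
  qed
  then show ?thesis unfolding Psi_def using u by (auto intro: cSup_upper)
qed

lemma Psi_nonneg: "is_norm nrm \<Longrightarrow> 0 \<le> Psi nrm \<beta>"
  using A_set_nonempty dual_norm_le_Psi dual_norm_nonneg by (metis equals0I order_trans)

lemma l1_resid_scaleR: "l1_resid N z (c *\<^sub>R v) = \<bar>c\<bar> * l1_resid N z v"
  by (simp add: l1_resid_def abs_mult sum_distrib_left)

lemma l1_resid_diff_le: "l1_resid N z (a - b) \<le> l1_resid N z a + l1_resid N z b"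
  unfolding l1_resid_def sum.distrib[symmetric]
  by (intro sum_mono) (simp add: inner_diff_left)

lemma gram_form_le_l1_resid:
  assumes n: "is_norm nrm" and bound: "\<forall>i<N. nrm (z i) \<le> R"
  shows "gram_form N z u \<le> R * dual_norm nrm u * l1_resid N z u"
proof -
  have "(u \<bullet> z i)\<^sup>2 \<le> \<bar>u \<bullet> z i\<bar> * (R * dual_norm nrm u)" if "i < N" for i
  proof -
    have "dual_norm nrm u * nrm (z i) \<le> dual_norm nrm u * R"
      using bound that dual_norm_nonneg[OF n, of u] by (simp add: mult_left_mono)
    then have "\<bar>u \<bullet> z i\<bar> \<le> R * dual_norm nrm u"
      using abs_inner_le_dual_norm[OF n, of u "z i"] by (simp add: mult.commute)
    then show ?thesis by (metis abs_ge_zero mult_left_mono power2_abs power2_eq_square)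
  qed
  then show ?thesis
    unfolding gram_form_def l1_resid_def sum_distrib_left
    by (force intro: sum_mono simp: mult.commute)
qed

theorem theorem3p6:
  fixes nrm :: "real^('n::finite option) \<Rightarrow> real"
    and z :: "nat \<Rightarrow> real^('n option)"
    and N :: nat and R \<gamma> \<alpha> :: real
    and B :: "(real^'n) set"
    and \<beta>hat \<beta>star :: "real^'n"
  assumes norm: "is_norm nrm"
    and bound: "\<forall>i<N. nrm (z i) \<le> R"
    and gamma_pos: "\<gamma> > 0"
    and hat_feas: "\<beta>hat \<in> B" "l1_resid N z (aug \<beta>hat) \<le> \<gamma>"
    and hat_opt: "\<forall>\<beta>\<in>B. l1_resid N z (aug \<beta>) \<le> \<gamma> \<longrightarrow>
                     dual_norm nrm (aug \<beta>hat) \<le> dual_norm nrm (aug \<beta>)"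
    and star_feas: "\<beta>star \<in> B" "l1_resid N z (aug \<beta>star) \<le> \<gamma>"
    and alpha_pos: "\<alpha> > 0"
    and RE: "\<forall>v\<in>A_set nrm \<beta>star. gram_form N z v \<ge> \<alpha>"
  shows "norm (\<beta>hat - \<beta>star) \<le> 2 * R * \<gamma> / \<alpha> * Psi nrm \<beta>star"
proof -
  have RE_bound: "\<alpha> \<le> R * dual_norm nrm u * l1_resid N z u" if "u \<in> A_set nrm \<beta>star" for u
    using RE that gram_form_le_l1_resid[OF norm bound] by (meson order_trans)
  \<comment> \<open>\<open>R \<ge> 0\<close> is not assumed: it follows since \<open>A(\<beta>star)\<close> is nonempty and \<open>\<alpha> > 0\<close>.\<close>
  obtain u0 where "u0 \<in> A_set nrm \<beta>star" using A_set_nonempty[OF norm] by blast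
  from RE_bound[OF this] have R_nonneg: "R \<ge> 0"
    using alpha_pos dual_norm_nonneg[OF norm, of u0] l1_resid_def[of N z u0]
    by (smt (verit) mult_nonpos_nonneg sum_nonneg abs_ge_zero)
  define v where "v = aug \<beta>hat - aug \<beta>star"
  have norm_v: "norm v = norm (\<beta>hat - \<beta>star)" unfolding v_def by (rule norm_aug_diff)
  show ?thesis
  proof (cases "v = 0")
    case True
    then show ?thesis using norm_v R_nonneg Psi_nonneg[OF norm] gamma_pos alpha_pos by simp
  next
    case False
    define u where "u = v /\<^sub>R norm v"
    have u_in_A: "u \<in> A_set nrm \<beta>star"
      unfolding u_def using False hat_opt star_feas by (intro normalized_in_A_set) (simp_all add: v_def)
    have "l1_resid N z v \<le> 2 * \<gamma>"
      using l1_resid_diff_le[of N z "aug \<beta>hat" "aug \<beta>star"] hat_feas star_feas by (simp add: v_def)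
    then have "R * dual_norm nrm u * l1_resid N z u \<le> R * dual_norm nrm u * (2 * \<gamma> / norm v)"
      using R_nonneg dual_norm_nonneg[OF norm, of u]
      by (intro mult_left_mono) (simp_all add: u_def l1_resid_scaleR divide_right_mono field_simps)
    then have "\<alpha> \<le> R * dual_norm nrm u * (2 * \<gamma> / norm v)"
      using RE_bound[OF u_in_A] by linarith
    then have "norm v \<le> 2 * R * \<gamma> / \<alpha> * dual_norm nrm u"
      using False alpha_pos by (simp add: field_simps)
    also have "\<dots> \<le> 2 * R * \<gamma> / \<alpha> * Psi nrm \<beta>star"
      using dual_norm_le_Psi[OF norm u_in_A] R_nonneg gamma_pos alpha_pos by (intro mult_left_mono) auto
    finally show ?thesis using norm_v by simp
  qed
qed

end
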